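(* Let $X,Y$ be $c$-free with respect to $(\varphi,\psi)$ on $\mathbb{C}\langle X,Y\rangle$. Let $\omega_X,\omega_Y$ be the unique formal power series in $z$ with zero constant term satisfying $\omega_X(z)=z\,\tilde\eta^\psi_Y(\omega_Y(z))$ and $\omega_Y(z)=z\,\tilde\eta^\psi_X(\omega_X(z))$ (the subordination functions of the free multiplicative convolution w.r.t. $\psi$, satisfying $M^\psi_{XY}(z)=M^\psi_X(\omega_X(z))$). Then $$M^\varphi_{XY}(z)=\frac{1}{1-z\,\tilde\eta^\varphi_X(\omega_X(z))\,\tilde\eta^\varphi_Y(\omega_Y(z))}.$$ Moreover, assuming $\psi(X)\neq0$ and $\psi(Y)\neq0$ and setting $\Sigma^\varphi_T=\tilde\eta^\varphi_T\circ(\eta^\psi_T)^{-1}$ for $T\in\{X,Y,XY\}$ (compositional inverse), one has $\Sigma^\varphi_{XY}=\Sigma^\varphi_X\cdot\Sigma^\varphi_Y$.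
   Context: $X,Y$ $c$-free w.r.t. $(\varphi,\psi)$ (unital functionals on $\mathbb{C}\langle X,Y\rangle$): $\psi(u_1\cdots u_n)=0$ and $\varphi(u_1\cdots u_n)=\prod\varphi(u_j)$ whenever the $u_j$ alternate between $\mathbb{C}\langle X\rangle$, $\mathbb{C}\langle Y\rangle$ with $\psi(u_j)=0$. For a functional $\theta$ and element $T$: moment generating function $M^\theta_T(z)=1+\sum_{n\ge1}\theta(T^n)z^n$; Boolean transform $\eta^\theta_T(z)=\sum_{n\ge1}\beta^\theta_n(T,\dots,T)z^n$ where $\beta^\theta_n$ are Boolean cumulants ($\theta(a_1\cdots a_n)=\sum_k\beta^\theta_k(a_1,\dots,a_k)\theta(a_{k+1}\cdots a_n)$), so that $M^\theta_T=(1-\eta^\theta_T)^{-1}$; shifted Boolean transform $\tilde\eta^\theta_T(z)=\eta^\theta_T(z)/z$. All identities are identities of formal power series in $z$. *)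

theory Defs
  imports Complex_Main "HOL-Computational_Algebra.Formal_Power_Series"
          "HOL-Computational_Algebra.Polynomial"
begin

text \<open>Letters of the free monoid on two generators X, Y. A linear functional on
  C<X,Y> is determined by its values on words, so functionals are modelled as
  maps from words to complex numbers.\<close>
datatype letter = LX | LY

type_synonym functional = "letter list \<Rightarrow> complex"

definition unital :: "functional \<Rightarrow> bool" where
  "unital \<theta> \<longleftrightarrow> \<theta> [] = 1"

text \<open>Value of the (linearly extended) functional on w * u_1 * ... * u_n, where
  each u_j = p_j(a_j) is a polynomial in a single generator a_j.\<close>
fun ev_prod :: "functional \<Rightarrow> (letter \<times> complex poly) list \<Rightarrow> letter list \<Rightarrow> complex" where
  "ev_prod \<theta> [] w = \<theta> w"
| "ev_prod \<theta> ((a, p) # us) w =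
     (\<Sum>k\<le>degree p. coeff p k * ev_prod \<theta> us (w @ replicate k a))"

definition ev :: "functional \<Rightarrow> (letter \<times> complex poly) list \<Rightarrow> complex" where
  "ev \<theta> us = ev_prod \<theta> us []"

definition alternating :: "(letter \<times> complex poly) list \<Rightarrow> bool" where
  "alternating us \<longleftrightarrow> (\<forall>i. Suc i < length us \<longrightarrow> fst (us ! i) \<noteq> fst (us ! Suc i))"

definition c_free :: "functional \<Rightarrow> functional \<Rightarrow> bool" where
  "c_free \<phi> \<psi> \<longleftrightarrow> unital \<phi> \<and> unital \<psi> \<and>
     (\<forall>us. us \<noteq> [] \<and> alternating us \<and> (\<forall>u\<in>set us. ev \<psi> [u] = 0) \<longrightarrow>
        ev \<psi> us = 0 \<and> ev \<phi> us = (\<Prod>u\<leftarrow>us. ev \<phi> [u]))"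

definition wX :: "nat \<Rightarrow> letter list" where "wX n = replicate n LX"
definition wY :: "nat \<Rightarrow> letter list" where "wY n = replicate n LY"
definition wXY :: "nat \<Rightarrow> letter list" where "wXY n = concat (replicate n [LX, LY])"

definition moment_fps :: "functional \<Rightarrow> (nat \<Rightarrow> letter list) \<Rightarrow> complex fps" where
  "moment_fps \<theta> T = Abs_fps (\<lambda>n. if n = 0 then 1 else \<theta> (T n))"

text \<open>Boolean cumulants beta_n(T,...,T) from the moment sequence m n = theta(T^n):
  m n = sum_{k=1..n} beta_k m (n-k), with m 0 = 1.\<close>
fun bool_cum :: "(nat \<Rightarrow> complex) \<Rightarrow> nat \<Rightarrow> complex" where
  "bool_cum m n = (if n = 0 then 0 else
      m n - (\<Sum>k\<in>{1..<n}. bool_cum m k * m (n - k)))"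

definition eta :: "functional \<Rightarrow> (nat \<Rightarrow> letter list) \<Rightarrow> complex fps" where
  "eta \<theta> T = Abs_fps (bool_cum (\<lambda>k. \<theta> (T k)))"

definition eta_tilde :: "functional \<Rightarrow> (nat \<Rightarrow> letter list) \<Rightarrow> complex fps" where
  "eta_tilde \<theta> T = fps_shift 1 (eta \<theta> T)"

definition Sigma_tr :: "functional \<Rightarrow> functional \<Rightarrow> (nat \<Rightarrow> letter list) \<Rightarrow> complex fps" where
  "Sigma_tr \<phi> \<psi> T = eta_tilde \<phi> T oo fps_inv (eta \<psi> T)"

end

theory Submission
  imports Defs "HOL-Library.Poly_Mapping"
begin

(* Let beta be the Boolean cumulants of X under psi. The polynomials
   P_j(x) = x^j - sum_i beta_i x^(j-i), j >= 1, are psi-centred in X, and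
   their generating series V = sum_n P_(n+1)(x) z^n satisfies z x V = V - x + eta~^psi_X.
   Substituting the subordination functions gives centred series V_X, V_Y in X and Y with
   omega_X x V_X = V_X - x + b and omega_Y y V_Y = V_Y - y + a, where omega_X = z a and
   omega_Y = z b. In the free algebra the series sum_n (xy)^n z^n then equals
   (1 + omega_Y V_Y) K / (1 - z a b), where K = 1 + omega_X V_X + z V_X V_Y K is a sum of
   alternating products of centred factors; c-freeness makes phi multiplicative on these.
   The Boolean recursion for phi relates phi(V_X) to eta~^phi_X, which gives the moment
   formula. Its case phi = psi identifies eta^psi_XY with eta^psi_X o omega_X and with
   eta^psi_Y o omega_Y, and composing with the inverse of eta^psi_XY turns the moment formula
   into the multiplicativity of Sigma^phi. *)

unbundle fps_syntax

section \<open>Formal power series\<close>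

lemma fps_fixpoint_exists:
  fixes B C :: "'a::ring_1 fps"
  assumes "C $ 0 = 0"
  shows "\<exists>K. K = B + C * K"
proof
  let ?K = "fps_right_inverse (1 - C) 1 * B"
  have "(1 - C) * ?K = B"
    using fps_right_inverse[of "1 - C" 1] assms by (simp add: mult.assoc[symmetric])
  then show "?K = B + C * ?K" by (simp add: algebra_simps)
qed

lemma fps_mult_left_cancel:
  fixes f g h :: "'a::ring_1 fps"
  assumes "f $ 0 = 1" and "f * g = f * h"
  shows "g = h"
proof -
  let ?L = "fps_left_inverse f 1"
  have L: "?L * f = 1" using fps_left_inverse[of 1 f] assms(1) by simp
  have "g = ?L * f * g" by (simp add: L)
  also have "\<dots> = ?L * f * h" by (simp only: mult.assoc assms(2))
  finally show ?thesis by (simp add: L)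
qed

text \<open>As \<open>C $ 0 = 0\<close>, the coefficient \<open>K $ n\<close> only depends on \<open>K $ j\<close> for \<open>j < n\<close>: apply the
  hypothesis on \<open>C\<close> to the truncation of \<open>K\<close> below \<open>n\<close>.\<close>
lemma fps_fixpoint_nth_induct:
  fixes B C K :: "'a::ring_1 fps"
  assumes K: "K = B + C * K" and C0: "C $ 0 = 0"
    and zero: "P 0" and add: "\<And>x y. P x \<Longrightarrow> P y \<Longrightarrow> P (x + y)"
    and B: "\<And>n. P (B $ n)" and C: "\<And>W m. (\<And>n. P (W $ n)) \<Longrightarrow> P ((C * W) $ m)"
  shows "P (K $ n)"
proof (induction n rule: less_induct)
  case (less n)
  define Kn where "Kn = Abs_fps (\<lambda>j. if j < n then K $ j else 0)"
  have "(C * K) $ n = (C * Kn) $ n"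
    unfolding fps_mult_nth
  proof (rule sum.cong)
    fix i assume "i \<in> {0..n}"
    then show "C $ i * K $ (n - i) = C $ i * Kn $ (n - i)"
      using C0 by (cases "i = 0") (auto simp: Kn_def)
  qed simp
  then have "K $ n = B $ n + (C * Kn) $ n" by (subst K) simp
  moreover have "P (Kn $ j)" for j using less.IH zero by (simp add: Kn_def)
  ultimately show ?case using B C add by simp
qed

lemma compose_fps_inv_eq_fps_inv:
  fixes e w f :: "'a::field fps"
  assumes e0: "e $ 0 = 0" and e1: "e $ 1 \<noteq> 0" and w0: "w $ 0 = 0"
    and f0: "f $ 0 = 0" and f1: "f $ 1 \<noteq> 0" and ew: "e oo w = f"
  shows "w oo fps_inv f = fps_inv e"
proof -
  let ?W = "w oo fps_inv f"
  have I0: "fps_inv f $ 0 = 0" and W0: "?W $ 0 = 0" using w0 by (simp_all add: fps_inv_def)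
  have "e oo ?W = fps_X"
    using fps_compose_assoc[OF I0 w0, of e] ew fps_inv_right[OF f0 f1] by simp
  then have "fps_inv e oo (e oo ?W) = fps_inv e"
    by simp
  moreover have "fps_inv e oo (e oo ?W) = ?W"
    using fps_compose_assoc[OF W0 e0] fps_inv[OF e0 e1] W0 by simp
  ultimately show ?thesis by simp
qed

section \<open>The free algebra\<close>

text \<open>With concatenation as addition on words, the convolution product of
  \<^typ>\<open>'a list \<Rightarrow>\<^sub>0 'b\<close> is the product of the free algebra over the letters.\<close>
instantiation list :: (type) monoid_add
begin
definition zero_list_def: "0 = []"
definition plus_list_def: "xs + ys = xs @ ys"
instance by standard (auto simp: zero_list_def plus_list_def)
end

type_synonym ncpoly = "letter list \<Rightarrow>\<^sub>0 complex"

lemma single_mult_single: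
  "Poly_Mapping.single u a * Poly_Mapping.single v b =
     (Poly_Mapping.single (u @ v) (a * b) :: 'a list \<Rightarrow>\<^sub>0 'b::semiring_0)"
  by (simp add: mult_single plus_list_def)

lemma single_Nil_one: "Poly_Mapping.single [] 1 = (1 :: 'a list \<Rightarrow>\<^sub>0 'b::semiring_1)"
  by (simp add: zero_list_def flip: single_one)

abbreviation nc_const :: "'b \<Rightarrow> 'a list \<Rightarrow>\<^sub>0 'b::zero" where
  "nc_const c \<equiv> Poly_Mapping.single [] c"

lemma lookup_nc_const_mult:
  fixes p :: "'a list \<Rightarrow>\<^sub>0 'b::comm_semiring_1"
  shows "Poly_Mapping.lookup (nc_const c * p) w = c * Poly_Mapping.lookup p w"
proof -
  have "nc_const c * p = Poly_Mapping.map ((*) c) p"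
    by (simp add: mult_map_scale_conv_mult zero_list_def)
  then show ?thesis by (simp add: Poly_Mapping.map.rep_eq when_def)
qed

lemma nc_const_commute:
  "nc_const c * p = p * (nc_const c :: 'a list \<Rightarrow>\<^sub>0 'b::comm_semiring_1)"
proof (rule poly_mapping_eqI)
  fix w
  have "(\<Sum>q. Poly_Mapping.lookup (nc_const c :: 'a list \<Rightarrow>\<^sub>0 'b) q when w = l @ q) = (c when w = l)"
    for l :: "'a list"
    by (rule trans[OF _ Sum_any_when_equal[of "\<lambda>_. c when w = l" "[]"]], rule Sum_any.cong)
       (auto simp: lookup_single when_def)
  then have "Poly_Mapping.lookup (p * nc_const c) w =
      (\<Sum>l. Poly_Mapping.lookup p l * (c when w = l))"
    by (simp add: lookup_mult plus_list_def)
  also have "\<dots> = c * Poly_Mapping.lookup p w"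
    by (simp add: mult_when mult.commute)
  finally show "Poly_Mapping.lookup (nc_const c * p) w = Poly_Mapping.lookup (p * nc_const c) w"
    by (simp add: lookup_nc_const_mult)
qed

definition lin_ext :: "functional \<Rightarrow> ncpoly \<Rightarrow> complex" where
  "lin_ext \<theta> p = (\<Sum>w. Poly_Mapping.lookup p w * \<theta> w)"

lemma lin_ext_add: "lin_ext \<theta> (p + q) = lin_ext \<theta> p + lin_ext \<theta> q"
proof -
  have fin: "finite {w. Poly_Mapping.lookup r w * \<theta> w \<noteq> 0}" for r :: ncpoly
    by (rule finite_subset[of _ "Poly_Mapping.keys r"]) (auto simp: in_keys_iff)
  show ?thesis
    unfolding lin_ext_def Poly_Mapping.lookup_add distrib_right
    by (rule Sum_any.distrib[OF fin fin])
qed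

lemma lin_ext_single: "lin_ext \<theta> (Poly_Mapping.single w c) = c * \<theta> w"
  by (simp add: lin_ext_def lookup_single when_mult)

lemma lin_ext_zero [simp]: "lin_ext \<theta> 0 = 0"
  by (simp add: lin_ext_def)

lemma lin_ext_sum: "lin_ext \<theta> (sum f S) = (\<Sum>i\<in>S. lin_ext \<theta> (f i))"
  by (induction S rule: infinite_finite_induct) (auto simp: lin_ext_add)

lemma lin_ext_diff: "lin_ext \<theta> (p - q) = lin_ext \<theta> p - lin_ext \<theta> q"
  using lin_ext_add[of \<theta> "p - q" q] by simp

lemma lin_ext_nc_const_mult: "lin_ext \<theta> (nc_const c * q) = c * lin_ext \<theta> q"
  by (simp add: lin_ext_def lookup_nc_const_mult Sum_any_right_distrib mult.assoc)

definition gen_poly :: "'a \<Rightarrow> 'b::comm_ring_1 poly \<Rightarrow> 'a list \<Rightarrow>\<^sub>0 'b" where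
  "gen_poly a p = (\<Sum>k\<le>degree p. Poly_Mapping.single (replicate k a) (coeff p k))"

lemma gen_poly_eq_sum_bound:
  assumes "degree p \<le> N"
  shows "gen_poly a p = (\<Sum>k\<le>N. Poly_Mapping.single (replicate k a) (coeff p k))"
  unfolding gen_poly_def
  by (rule sum.mono_neutral_left) (use assms in \<open>auto simp: coeff_eq_0\<close>)

lemma gen_poly_pCons:
  "gen_poly a (pCons c p) = nc_const c + Poly_Mapping.single [a] 1 * gen_poly a p"
proof -
  have "gen_poly a (pCons c p) =
      (\<Sum>k\<le>Suc (degree p). Poly_Mapping.single (replicate k a) (coeff (pCons c p) k))"
    by (rule gen_poly_eq_sum_bound) (rule degree_pCons_le)
  also have "\<dots> = nc_const c + Poly_Mapping.single [a] 1 * gen_poly a p"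
    by (subst sum.atMost_Suc_shift) (simp add: gen_poly_def sum_distrib_left single_mult_single)
  finally show ?thesis .
qed

lemma gen_poly_0 [simp]: "gen_poly a 0 = 0"
  by (simp add: gen_poly_def)

lemma gen_poly_const: "gen_poly a [:c:] = nc_const c"
  by (simp add: gen_poly_pCons)

lemma gen_poly_1: "gen_poly a 1 = 1"
  by (simp add: gen_poly_const single_Nil_one flip: pCons_one)

lemma gen_poly_add: "gen_poly a (p + q) = gen_poly a p + gen_poly a q"
proof (induction p arbitrary: q)
  case (pCons c p)
  then show ?case
    by (cases q) (simp add: gen_poly_pCons single_add distrib_left)
qed simp

lemma gen_poly_smult: "gen_poly a (smult c p) = nc_const c * gen_poly a p"
proof (induction p)
  case (pCons d p)
  have "nc_const c * (Poly_Mapping.single [a] 1 * gen_poly a p) =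
      Poly_Mapping.single [a] 1 * (nc_const c * gen_poly a p)"
    by (simp add: mult.assoc[symmetric] single_mult_single)
  then show ?case
    using pCons.IH by (simp add: gen_poly_pCons distrib_left single_mult_single)
qed simp

lemma gen_poly_mult: "gen_poly a (p * q) = gen_poly a p * gen_poly a q"
proof (induction p)
  case (pCons c p)
  then show ?case
    by (simp add: gen_poly_add gen_poly_smult gen_poly_pCons distrib_right mult.assoc)
qed simp

lemma gen_poly_diff: "gen_poly a (p - q) = gen_poly a p - gen_poly a q"
  using gen_poly_add[of a "p - q" q] by simp

lemma gen_poly_sum: "gen_poly a (sum f S) = (\<Sum>i\<in>S. gen_poly a (f i))"
  by (induction S rule: infinite_finite_induct) (auto simp: gen_poly_add)

lemma gen_poly_monom_power: "gen_poly a ([:0, 1:] ^ k) = Poly_Mapping.single (replicate k a) 1"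
  by (induction k) (simp_all add: gen_poly_1 single_Nil_one gen_poly_mult gen_poly_pCons
      single_mult_single replicate_append_same flip: replicate_Suc)

lemma gen_poly_x: "gen_poly a [:0, 1:] = Poly_Mapping.single [a] (1 :: 'b::comm_ring_1)"
  using gen_poly_monom_power[of a 1] by simp

definition prod_factors :: "(letter \<times> complex poly) list \<Rightarrow> ncpoly" where
  "prod_factors us = prod_list (map (case_prod gen_poly) us)"

lemma ev_prod_eq_lin_ext: "ev_prod \<theta> us w = lin_ext \<theta> (Poly_Mapping.single w 1 * prod_factors us)"
proof (induction us arbitrary: w)
  case Nil
  then show ?case by (simp add: prod_factors_def lin_ext_single)
next
  case (Cons u us)
  obtain a p where u: "u = (a, p)" by (cases u)
  have "Poly_Mapping.single w 1 * gen_poly a p * prod_factors us =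
        (\<Sum>k\<le>degree p. nc_const (coeff p k) *
           (Poly_Mapping.single (w @ replicate k a) 1 * prod_factors us))"
    unfolding gen_poly_def sum_distrib_left sum_distrib_right
    by (rule sum.cong) (auto simp: single_mult_single mult.assoc[symmetric])
  then show ?case
    using Cons.IH by (simp add: u prod_factors_def mult.assoc lin_ext_sum lin_ext_nc_const_mult)
qed

lemma ev_eq_lin_ext: "ev \<theta> us = lin_ext \<theta> (prod_factors us)"
  by (simp add: ev_def ev_prod_eq_lin_ext single_Nil_one)

section \<open>c-freeness as multiplicativity\<close>

lemma alternating_snoc:
  assumes "alternating xs" and "xs \<noteq> [] \<longrightarrow> fst (last xs) \<noteq> fst y"
  shows "alternating (xs @ [y])"
  unfolding alternating_def
proof (intro allI impI)
  fix i assume i: "Suc i < length (xs @ [y])"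
  show "fst ((xs @ [y]) ! i) \<noteq> fst ((xs @ [y]) ! Suc i)"
  proof (cases "Suc i < length xs")
    case True
    then show ?thesis using assms(1) by (simp add: nth_append alternating_def)
  next
    case False
    with i have "Suc i = length xs" by simp
    then have "xs \<noteq> []" "i = length xs - 1" by auto
    then have "last xs = xs ! i" by (simp add: last_conv_nth)
    with \<open>xs \<noteq> []\<close> show ?thesis using assms(2) \<open>Suc i = length xs\<close> by (simp add: nth_append)
  qed
qed

lemma c_free_lin_ext_prod_factors:
  assumes "c_free \<phi> \<psi>" "us \<noteq> []" "alternating us" "\<forall>u\<in>set us. ev \<psi> [u] = 0"
  shows "lin_ext \<psi> (prod_factors us) = 0 \<and> lin_ext \<phi> (prod_factors us) = (\<Prod>u\<leftarrow>us. ev \<phi> [u])"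
  using assms unfolding c_free_def ev_eq_lin_ext by blast

lemma c_free_self:
  assumes "c_free \<phi> \<psi>"
  shows "c_free \<psi> \<psi>"
  unfolding c_free_def
proof (intro conjI allI impI)
  fix us assume us: "us \<noteq> [] \<and> alternating us \<and> (\<forall>u\<in>set us. ev \<psi> [u] = 0)"
  then show "ev \<psi> us = 0" using assms unfolding c_free_def by blast
  from us obtain v vs where "us = v # vs" "ev \<psi> [v] = 0" by (cases us) auto
  with \<open>ev \<psi> us = 0\<close> show "ev \<psi> us = (\<Prod>u\<leftarrow>us. ev \<psi> [u])" by simp
qed (use assms in \<open>simp_all add: c_free_def\<close>)

inductive alt_centred :: "functional \<Rightarrow> letter \<Rightarrow> ncpoly \<Rightarrow> bool" for \<psi> where
  alt_centred_const: "alt_centred \<psi> a (nc_const c)"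
| alt_centred_add: "alt_centred \<psi> a p \<Longrightarrow> alt_centred \<psi> a q \<Longrightarrow> alt_centred \<psi> a (p + q)"
| alt_centred_cons: "lin_ext \<psi> (gen_poly a u) = 0 \<Longrightarrow> alt_centred \<psi> b w \<Longrightarrow> b \<noteq> a \<Longrightarrow>
    alt_centred \<psi> a (gen_poly a u * w)"

lemma alt_centred_0: "alt_centred \<psi> a 0"
  using alt_centred_const[of \<psi> a 0] by simp

lemma alt_centred_1: "alt_centred \<psi> a 1"
  using alt_centred_const[of \<psi> a 1] by (simp add: single_Nil_one)

lemma alt_centred_nc_const_mult: "alt_centred \<psi> a w \<Longrightarrow> alt_centred \<psi> a (nc_const c * w)"
proof (induction rule: alt_centred.induct)
  case (alt_centred_const a d)
  then show ?case
    using alt_centred.alt_centred_const[of \<psi> a "c * d"] by (simp add: single_mult_single)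
next
  case (alt_centred_add a p q)
  then show ?case by (simp add: distrib_left alt_centred.alt_centred_add)
next
  case (alt_centred_cons a u b w)
  have "nc_const c * (gen_poly a u * w) = gen_poly a (smult c u) * w"
    by (simp add: gen_poly_smult mult.assoc)
  moreover have "lin_ext \<psi> (gen_poly a (smult c u)) = 0"
    using alt_centred_cons by (simp add: gen_poly_smult lin_ext_nc_const_mult)
  ultimately show ?case using alt_centred_cons by (metis alt_centred.alt_centred_cons)
qed

lemma alt_centred_sum: "(\<And>i. i \<in> S \<Longrightarrow> alt_centred \<psi> a (f i)) \<Longrightarrow> alt_centred \<psi> a (sum f S)"
  by (induction S rule: infinite_finite_induct) (auto intro: alt_centred_add alt_centred_0)

text \<open>Multiplicativity is proved for an alternating product \<open>vs\<close> of centred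
  factors standing in front of \<open>w\<close>; the induction on \<open>w\<close> moves its first factor to the end of \<open>vs\<close>.\<close>
lemma c_free_lin_ext_prod_factors_mult:
  assumes cf: "c_free \<phi> \<psi>"
  shows "alt_centred \<psi> a w \<Longrightarrow> alternating vs \<Longrightarrow> \<forall>u\<in>set vs. ev \<psi> [u] = 0 \<Longrightarrow>
    (vs \<noteq> [] \<longrightarrow> fst (last vs) \<noteq> a) \<Longrightarrow>
    lin_ext \<phi> (prod_factors vs * w) = (\<Prod>u\<leftarrow>vs. ev \<phi> [u]) * lin_ext \<phi> w \<and>
    (vs \<noteq> [] \<longrightarrow> lin_ext \<psi> (prod_factors vs * w) = 0)"
proof (induction arbitrary: vs rule: alt_centred.induct)
  case (alt_centred_const a c)
  have unital: "\<phi> [] = 1" using cf by (simp add: c_free_def unital_def)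
  have "lin_ext \<phi> (prod_factors vs) = (\<Prod>u\<leftarrow>vs. ev \<phi> [u]) \<and>
      (vs \<noteq> [] \<longrightarrow> lin_ext \<psi> (prod_factors vs) = 0)"
    using c_free_lin_ext_prod_factors[OF cf _ alt_centred_const(1,2)] unital
    by (cases "vs = []") (simp_all add: prod_factors_def lin_ext_single flip: single_Nil_one)
  then show ?case
    using unital by (simp add: nc_const_commute[symmetric] lin_ext_nc_const_mult lin_ext_single)
next
  case (alt_centred_add a p q)
  then show ?case by (simp add: distrib_left lin_ext_add)
next
  case (alt_centred_cons a u b w)
  let ?vs = "vs @ [(a, u)]"
  have "alternating ?vs" using alt_centred_cons.prems by (simp add: alternating_snoc)
  then have snoc: "lin_ext \<phi> (prod_factors ?vs * w) = (\<Prod>u\<leftarrow>?vs. ev \<phi> [u]) * lin_ext \<phi> w \<and>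
      lin_ext \<psi> (prod_factors ?vs * w) = 0"
    using alt_centred_cons.IH[of ?vs] alt_centred_cons.prems alt_centred_cons.hyps
    by (auto simp: ev_eq_lin_ext prod_factors_def)
  have single: "lin_ext \<phi> (gen_poly a u * w) = ev \<phi> [(a, u)] * lin_ext \<phi> w"
    using alt_centred_cons.IH[of "[(a, u)]"] alt_centred_cons.hyps
    by (simp add: alternating_def prod_factors_def ev_eq_lin_ext)
  have "prod_factors vs * (gen_poly a u * w) = prod_factors ?vs * w"
    by (simp add: prod_factors_def mult.assoc)
  then show ?case using snoc single by (simp add: mult.assoc)
qed

lemma c_free_lin_ext_gen_poly_mult:
  assumes "c_free \<phi> \<psi>" "alt_centred \<psi> b w" "a \<noteq> b" "lin_ext \<psi> (gen_poly a u) = 0"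
  shows "lin_ext \<phi> (gen_poly a u * w) = lin_ext \<phi> (gen_poly a u) * lin_ext \<phi> w"
  using c_free_lin_ext_prod_factors_mult[OF assms(1,2), of "[(a, u)]"] assms(3,4)
  by (simp add: alternating_def prod_factors_def ev_eq_lin_ext)

section \<open>Boolean cumulants\<close>

declare bool_cum.simps [simp del]

lemma bool_cum_0 [simp]: "bool_cum m 0 = 0"
  by (subst bool_cum.simps) simp

lemma bool_cum_pos:
  "n \<noteq> 0 \<Longrightarrow> bool_cum m n = m n - (\<Sum>k\<in>{1..<n}. bool_cum m k * m (n - k))"
  by (subst bool_cum.simps) simp

lemma bool_cum_cong:
  assumes "\<And>k. 0 < k \<Longrightarrow> m k = m' k"
  shows "bool_cum m n = bool_cum m' n"
proof (induction n rule: less_induct)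
  case (less n)
  show ?case
  proof (cases "n = 0")
    case False
    have "(\<Sum>k\<in>{1..<n}. bool_cum m k * m (n - k)) = (\<Sum>k\<in>{1..<n}. bool_cum m' k * m' (n - k))"
      by (rule sum.cong) (auto simp: less.IH assms)
    then show ?thesis using False assms by (simp add: bool_cum_pos)
  qed simp
qed

lemma moment_mult_one_minus_bool_cum:
  assumes "m 0 = 1"
  shows "Abs_fps m * (1 - Abs_fps (bool_cum m)) = 1"
proof (rule fps_ext)
  fix n
  show "(Abs_fps m * (1 - Abs_fps (bool_cum m))) $ n = 1 $ n"
  proof (cases "n = 0")
    case False
    have "{0..n} = insert 0 (insert n {1..<n})" using False by auto
    then have "(\<Sum>k=0..n. bool_cum m k * m (n - k)) =
        bool_cum m n + (\<Sum>k\<in>{1..<n}. bool_cum m k * m (n - k))"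
      using False assms by simp
    also have "\<dots> = m n" using bool_cum_pos[OF False, of m] by simp
    finally have "(Abs_fps m * Abs_fps (bool_cum m)) $ n = m n"
      by (subst mult.commute) (simp add: fps_mult_nth)
    then show ?thesis
      using False by (simp add: right_diff_distrib)
  qed (use assms in simp)
qed

lemma moment_fps_mult_one_minus_eta: "moment_fps \<theta> T * (1 - eta \<theta> T) = 1"
proof -
  let ?m = "\<lambda>n. if n = 0 then 1 else \<theta> (T n)"
  have "eta \<theta> T = Abs_fps (bool_cum ?m)"
    unfolding eta_def by (rule arg_cong[where f = Abs_fps], rule ext, rule bool_cum_cong) simp
  then show ?thesis
    unfolding moment_fps_def by (simp add: moment_mult_one_minus_bool_cum)
qed

lemma eta_eq_fps_X_mult_eta_tilde: "eta \<theta> T = fps_X * eta_tilde \<theta> T"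
  by (rule fps_ext) (simp add: eta_def eta_tilde_def)

lemma eta_tilde_nth_0: "eta_tilde \<theta> T $ 0 = \<theta> (T 1)"
  by (simp add: eta_tilde_def eta_def bool_cum_pos)

lemma eta_tilde_replicate:
  "eta_tilde \<theta> (\<lambda>n. replicate n a) = fps_shift 1 (Abs_fps (bool_cum (\<lambda>k. \<theta> (replicate k a))))"
  by (simp add: eta_tilde_def eta_def)

lemma eta_tilde_eq_if_moment_fps_eq:
  assumes "moment_fps \<theta> T = inverse (1 - fps_X * g)"
  shows "eta_tilde \<theta> T = g"
proof -
  have "inverse (moment_fps \<theta> T) = 1 - eta \<theta> T"
    by (rule fps_inverse_unique) (rule moment_fps_mult_one_minus_eta)
  then have "fps_X * eta_tilde \<theta> T = fps_X * g"
    using assms by (simp add: eta_eq_fps_X_mult_eta_tilde)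
  then show ?thesis by simp
qed

definition bool_poly :: "(nat \<Rightarrow> 'a::comm_ring_1) \<Rightarrow> nat \<Rightarrow> 'a poly" where
  "bool_poly \<beta> j = [:0, 1:] ^ j - (\<Sum>i\<in>{1..j}. smult (\<beta> i) ([:0, 1:] ^ (j - i)))"

lemma bool_poly_0: "bool_poly \<beta> 0 = 1"
  by (simp add: bool_poly_def)

lemma bool_poly_Suc: "bool_poly \<beta> (Suc j) = [:0, 1:] * bool_poly \<beta> j - [:\<beta> (Suc j):]"
proof -
  have "[:0, 1:] * (\<Sum>i\<in>{1..j}. smult (\<beta> i) ([:0, 1:] ^ (j - i))) =
        (\<Sum>i\<in>{1..j}. smult (\<beta> i) ([:0, 1:] ^ (Suc j - i)))"
    unfolding sum_distrib_left by (rule sum.cong) (auto simp: mult_smult_right Suc_diff_le)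
  then show ?thesis by (simp add: bool_poly_def right_diff_distrib)
qed

lemma lin_ext_gen_poly_bool_poly:
  "lin_ext \<theta> (gen_poly a (bool_poly \<beta> j)) =
     \<theta> (replicate j a) - (\<Sum>i\<in>{1..j}. \<beta> i * \<theta> (replicate (j - i) a))"
  by (simp add: bool_poly_def gen_poly_diff gen_poly_sum gen_poly_smult gen_poly_monom_power
      lin_ext_diff lin_ext_sum lin_ext_nc_const_mult lin_ext_single)

lemma lin_ext_gen_poly_bool_poly_bool_cum:
  assumes "\<psi> [] = 1" "j \<noteq> 0"
  shows "lin_ext \<psi> (gen_poly a (bool_poly (bool_cum (\<lambda>k. \<psi> (replicate k a))) j)) = 0"
proof -
  let ?m = "\<lambda>k. \<psi> (replicate k a)"
  have "{1..j} = insert j {1..<j}" using assms(2) by auto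
  then have "(\<Sum>i\<in>{1..j}. bool_cum ?m i * ?m (j - i)) =
        bool_cum ?m j + (\<Sum>i\<in>{1..<j}. bool_cum ?m i * ?m (j - i))"
    using assms(1) by simp
  then show ?thesis
    using bool_cum_pos[OF assms(2), of ?m] by (simp add: lin_ext_gen_poly_bool_poly)
qed

section \<open>Series with polynomial coefficients\<close>

definition fps_pconst :: "'a::zero fps \<Rightarrow> 'a poly fps" where
  "fps_pconst f = Abs_fps (\<lambda>n. [:f $ n:])"

lemma fps_pconst_nth [simp]: "fps_pconst f $ n = [:f $ n:]"
  by (simp add: fps_pconst_def)

lemma fps_pconst_diff: "fps_pconst (f - g) = fps_pconst f - fps_pconst (g :: 'a::comm_ring_1 fps)"
  by (rule fps_ext) simp

lemma fps_pconst_mult: "fps_pconst (f * g) = fps_pconst f * fps_pconst (g :: 'a::comm_ring_1 fps)"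
  by (rule fps_ext) (simp add: fps_mult_nth mult.commute flip: sum_to_poly)

lemma fps_pconst_1: "fps_pconst 1 = (1 :: 'a::comm_ring_1 poly fps)"
  by (rule fps_ext) (simp add: one_pCons)

lemma fps_pconst_power: "fps_pconst (f ^ k) = fps_pconst (f :: 'a::comm_ring_1 fps) ^ k"
  by (induction k) (simp_all add: fps_pconst_1 fps_pconst_mult)

lemma fps_compose_fps_pconst_nth:
  "(F oo fps_pconst w) $ n = (\<Sum>i=0..n. smult ((w ^ i) $ n) (F $ i :: 'a::comm_ring_1 poly))"
  by (simp add: fps_compose_nth mult.commute flip: fps_pconst_power)

lemma fps_pconst_compose:
  "fps_pconst (f oo g) = fps_pconst f oo fps_pconst (g :: 'a::comm_ring_1 fps)"
  by (rule fps_ext) (simp add: fps_compose_nth mult.commute flip: fps_pconst_power sum_to_poly)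

definition bool_poly_fps :: "(nat \<Rightarrow> 'a::comm_ring_1) \<Rightarrow> 'a poly fps" where
  "bool_poly_fps \<beta> = Abs_fps (\<lambda>n. bool_poly \<beta> (Suc n))"

lemma fps_X_mult_bool_poly_fps:
  "fps_X * fps_const [:0, 1:] * bool_poly_fps \<beta> =
     bool_poly_fps \<beta> - fps_const [:0, 1:] + fps_pconst (fps_shift 1 (Abs_fps \<beta>))"
proof (rule fps_ext)
  fix n
  show "(fps_X * fps_const [:0, 1:] * bool_poly_fps \<beta>) $ n =
      (bool_poly_fps \<beta> - fps_const [:0, 1:] + fps_pconst (fps_shift 1 (Abs_fps \<beta>))) $ n"
    by (cases n) (simp_all add: mult.assoc bool_poly_fps_def bool_poly_Suc bool_poly_0)
qed

lemma fps_pconst_mult_bool_poly_fps_compose: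
  fixes w :: "'a::idom fps"
  assumes w0: "w $ 0 = 0"
  shows "fps_pconst w * fps_const [:0, 1:] * (bool_poly_fps \<beta> oo fps_pconst w) =
    (bool_poly_fps \<beta> oo fps_pconst w) - fps_const [:0, 1:] +
      fps_pconst (fps_shift 1 (Abs_fps \<beta>) oo w)"
proof -
  have c0: "fps_pconst w $ 0 = 0" using w0 by simp
  have "(fps_X * fps_const [:0, 1:] * bool_poly_fps \<beta>) oo fps_pconst w =
      (bool_poly_fps \<beta> - fps_const [:0, 1:] + fps_pconst (fps_shift 1 (Abs_fps \<beta>))) oo fps_pconst w"
    by (simp only: fps_X_mult_bool_poly_fps)
  then show ?thesis
    by (simp add: fps_compose_mult_distrib[OF c0] fps_compose_add_distrib
        fps_compose_sub_distrib c0 w0 fps_pconst_compose)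
qed

definition eval_gen :: "functional \<Rightarrow> letter \<Rightarrow> complex poly fps \<Rightarrow> complex fps" where
  "eval_gen \<theta> a F = Abs_fps (\<lambda>n. lin_ext \<theta> (gen_poly a (F $ n)))"

lemma eval_gen_compose: "eval_gen \<theta> a (F oo fps_pconst w) = eval_gen \<theta> a F oo w"
  unfolding eval_gen_def fps_compose_fps_pconst_nth
  by (rule fps_ext) (simp add: fps_compose_nth gen_poly_sum gen_poly_smult lin_ext_sum
      lin_ext_nc_const_mult mult.commute)

lemma eval_gen_bool_poly_fps_bool_cum:
  assumes "\<psi> [] = 1"
  shows "eval_gen \<psi> a (bool_poly_fps (bool_cum (\<lambda>k. \<psi> (replicate k a)))) = 0"
  by (rule fps_ext)
    (simp add: eval_gen_def bool_poly_fps_def lin_ext_gen_poly_bool_poly_bool_cum[of \<psi>, OF assms])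

lemma moment_fps_mult_bool_poly_fps:
  assumes "\<theta> [] = 1"
  shows "moment_fps \<theta> (\<lambda>n. replicate n a) * (1 - fps_X * fps_shift 1 (Abs_fps \<beta>)) =
    1 + fps_X * eval_gen \<theta> a (bool_poly_fps \<beta>)"
proof (rule fps_ext)
  fix n
  have "(moment_fps \<theta> (\<lambda>n. replicate n a) * (fps_X * fps_shift 1 (Abs_fps \<beta>))) $ n =
      (\<Sum>k=0..n. (fps_X * fps_shift 1 (Abs_fps \<beta>)) $ k * \<theta> (replicate (n - k) a))"
    unfolding mult.commute[of "moment_fps _ _"] fps_mult_nth[of "fps_X * _"]
    using assms by (auto simp: moment_fps_def intro!: sum.cong)
  also have "\<dots> = (\<Sum>k\<in>{1..n}. \<beta> k * \<theta> (replicate (n - k) a))"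
  proof -
    have "{0..n} = insert 0 {1..n}" by auto
    then show ?thesis by (auto intro!: sum.cong)
  qed
  finally show "(moment_fps \<theta> (\<lambda>n. replicate n a) * (1 - fps_X * fps_shift 1 (Abs_fps \<beta>))) $ n =
      (1 + fps_X * eval_gen \<theta> a (bool_poly_fps \<beta>)) $ n"
    using assms
    by (cases n) (simp_all add: right_diff_distrib eval_gen_def bool_poly_fps_def
        lin_ext_gen_poly_bool_poly moment_fps_def)
qed

lemma eta_tilde_mult_eval_bool_poly_fps:
  assumes "\<theta> [] = 1"
  shows "eta_tilde \<theta> (\<lambda>n. replicate n a) * (1 + fps_X * eval_gen \<theta> a (bool_poly_fps \<beta>)) =
    fps_shift 1 (Abs_fps \<beta>) + eval_gen \<theta> a (bool_poly_fps \<beta>)"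
    (is "?e * (1 + fps_X * ?G) = ?b + ?G")
proof -
  let ?M = "moment_fps \<theta> (\<lambda>n. replicate n a)"
  have "(1 + fps_X * ?G) * (1 - fps_X * ?e) = (1 - fps_X * ?b) * (?M * (1 - fps_X * ?e))"
    using moment_fps_mult_bool_poly_fps[of \<theta>, OF assms] by (simp add: mult_ac)
  also have "\<dots> = 1 - fps_X * ?b"
    using moment_fps_mult_one_minus_eta[of \<theta>] by (simp add: eta_eq_fps_X_mult_eta_tilde)
  finally have "fps_X * (?e * (1 + fps_X * ?G) - (?b + ?G)) = 0"
    by (simp add: algebra_simps)
  then show ?thesis by simp
qed

section \<open>Series over the free algebra\<close>

definition gen_fps :: "letter \<Rightarrow> complex poly fps \<Rightarrow> ncpoly fps" where
  "gen_fps a F = Abs_fps (\<lambda>n. gen_poly a (F $ n))"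

lemma gen_fps_nth [simp]: "gen_fps a F $ n = gen_poly a (F $ n)"
  by (simp add: gen_fps_def)

lemma gen_fps_add: "gen_fps a (F + G) = gen_fps a F + gen_fps a G"
  by (rule fps_ext) (simp add: gen_poly_add)

lemma gen_fps_diff: "gen_fps a (F - G) = gen_fps a F - gen_fps a G"
  by (rule fps_ext) (simp add: gen_poly_diff)

lemma gen_fps_mult: "gen_fps a (F * G) = gen_fps a F * gen_fps a G"
  by (rule fps_ext) (simp add: fps_mult_nth gen_poly_sum gen_poly_mult)

lemma gen_fps_fps_const: "gen_fps a (fps_const p) = fps_const (gen_poly a p)"
  by (rule fps_ext) simp

definition scalar_fps :: "complex fps \<Rightarrow> ncpoly fps" where
  "scalar_fps f = Abs_fps (\<lambda>n. nc_const (f $ n))"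

lemma gen_fps_fps_pconst: "gen_fps a (fps_pconst f) = scalar_fps f"
  by (rule fps_ext) (simp add: scalar_fps_def gen_poly_const)

lemma scalar_fps_mult: "scalar_fps (f * g) = scalar_fps f * scalar_fps g"
  by (metis gen_fps_fps_pconst gen_fps_mult fps_pconst_mult)

lemma scalar_fps_diff: "scalar_fps (f - g) = scalar_fps f - scalar_fps g"
  by (metis gen_fps_fps_pconst gen_fps_diff fps_pconst_diff)

lemma scalar_fps_1: "scalar_fps 1 = 1"
  by (rule fps_ext) (simp add: scalar_fps_def single_Nil_one)

lemma scalar_fps_fps_X: "scalar_fps fps_X = fps_X"
  by (rule fps_ext) (simp add: scalar_fps_def fps_X_def single_Nil_one)

lemma scalar_fps_commute: "scalar_fps f * F = F * scalar_fps f"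
proof (rule fps_ext)
  fix n
  have "(scalar_fps f * F) $ n = (\<Sum>i=0..n. F $ (n - i) * nc_const (f $ i))"
    by (simp add: fps_mult_nth scalar_fps_def nc_const_commute)
  also have "\<dots> = (F * scalar_fps f) $ n"
    by (subst sum.atLeastAtMost_rev) (simp add: fps_mult_nth scalar_fps_def)
  finally show "(scalar_fps f * F) $ n = (F * scalar_fps f) $ n" .
qed

definition lin_ext_fps :: "functional \<Rightarrow> ncpoly fps \<Rightarrow> complex fps" where
  "lin_ext_fps \<theta> F = Abs_fps (\<lambda>n. lin_ext \<theta> (F $ n))"

lemma lin_ext_fps_add: "lin_ext_fps \<theta> (F + G) = lin_ext_fps \<theta> F + lin_ext_fps \<theta> G"
  by (rule fps_ext) (simp add: lin_ext_fps_def lin_ext_add)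

lemma lin_ext_fps_scalar_fps_mult: "lin_ext_fps \<theta> (scalar_fps f * F) = f * lin_ext_fps \<theta> F"
  by (rule fps_ext) (simp add: lin_ext_fps_def scalar_fps_def fps_mult_nth lin_ext_sum
      lin_ext_nc_const_mult)

lemma lin_ext_fps_mult_scalar_fps: "lin_ext_fps \<theta> (F * scalar_fps f) = lin_ext_fps \<theta> F * f"
  by (simp add: lin_ext_fps_scalar_fps_mult mult.commute flip: scalar_fps_commute)

lemma lin_ext_fps_fps_X_mult: "lin_ext_fps \<theta> (fps_X * F) = fps_X * lin_ext_fps \<theta> F"
  by (rule fps_ext) (simp add: lin_ext_fps_def)

lemma lin_ext_fps_1: "\<theta> [] = 1 \<Longrightarrow> lin_ext_fps \<theta> 1 = 1"
  by (rule fps_ext) (simp add: lin_ext_fps_def lin_ext_single flip: single_Nil_one)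

lemma lin_ext_fps_gen_fps: "lin_ext_fps \<theta> (gen_fps a F) = eval_gen \<theta> a F"
  by (rule fps_ext) (simp add: lin_ext_fps_def eval_gen_def)

definition alt_centred_fps :: "functional \<Rightarrow> letter \<Rightarrow> ncpoly fps \<Rightarrow> bool" where
  "alt_centred_fps \<psi> a F \<longleftrightarrow> (\<forall>n. alt_centred \<psi> a (F $ n))"

lemma alt_centred_fps_1: "alt_centred_fps \<psi> a 1"
  by (simp add: alt_centred_fps_def alt_centred_1 alt_centred_0)

lemma alt_centred_fps_add:
  "alt_centred_fps \<psi> a F \<Longrightarrow> alt_centred_fps \<psi> a G \<Longrightarrow> alt_centred_fps \<psi> a (F + G)"
  by (simp add: alt_centred_fps_def alt_centred_add)

lemma alt_centred_fps_scalar_fps_mult: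
  "alt_centred_fps \<psi> a F \<Longrightarrow> alt_centred_fps \<psi> a (scalar_fps f * F)"
  unfolding alt_centred_fps_def fps_mult_nth
  by (auto simp: scalar_fps_def intro!: alt_centred_sum alt_centred_nc_const_mult)

lemma alt_centred_fps_fps_X_mult: "alt_centred_fps \<psi> a F \<Longrightarrow> alt_centred_fps \<psi> a (fps_X * F)"
  by (simp add: alt_centred_fps_def alt_centred_0)

lemma eval_gen_eq_0_iff: "eval_gen \<theta> a V = 0 \<longleftrightarrow> (\<forall>n. lin_ext \<theta> (gen_poly a (V $ n)) = 0)"
  by (simp add: eval_gen_def fps_eq_iff)

lemma alt_centred_fps_gen_fps_mult:
  assumes "eval_gen \<psi> a V = 0" "alt_centred_fps \<psi> b W" "b \<noteq> a"
  shows "alt_centred_fps \<psi> a (gen_fps a V * W)"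
  using assms unfolding alt_centred_fps_def eval_gen_eq_0_iff fps_mult_nth gen_fps_nth
  by (auto intro!: alt_centred_sum alt_centred_cons)

lemma alt_centred_fps_gen_fps:
  "eval_gen \<psi> a V = 0 \<Longrightarrow> b \<noteq> a \<Longrightarrow> alt_centred_fps \<psi> a (gen_fps a V)"
  using alt_centred_fps_gen_fps_mult[OF _ alt_centred_fps_1] by simp

lemma c_free_lin_ext_fps_gen_fps_mult:
  assumes "c_free \<phi> \<psi>" "eval_gen \<psi> a V = 0" "alt_centred_fps \<psi> b W" "a \<noteq> b"
  shows "lin_ext_fps \<phi> (gen_fps a V * W) = eval_gen \<phi> a V * lin_ext_fps \<phi> W"
proof (rule fps_ext)
  fix n
  have "lin_ext \<phi> (gen_poly a (V $ i) * W $ (n - i)) =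
      lin_ext \<phi> (gen_poly a (V $ i)) * lin_ext \<phi> (W $ (n - i))" for i
    using assms(2,3) unfolding eval_gen_eq_0_iff alt_centred_fps_def
    by (blast intro: c_free_lin_ext_gen_poly_mult[OF assms(1) _ assms(4)])
  then show "lin_ext_fps \<phi> (gen_fps a V * W) $ n = (eval_gen \<phi> a V * lin_ext_fps \<phi> W) $ n"
    by (simp add: lin_ext_fps_def eval_gen_def fps_mult_nth lin_ext_sum)
qed

section \<open>Subordination\<close>

lemma fixpoint_mult_identity:
  fixes x y u v k z a b :: "'r::ring_1"
  assumes z: "\<And>t. z * t = t * z" and a: "\<And>t. a * t = t * a" and b: "\<And>t. b * t = t * b"
    and u: "z * a * x * u = u - x + b" and v: "z * b * y * v = v - y + a"
    and k: "k = 1 + z * a * u + z * u * v * k"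
  shows "(1 - z * (x * y)) * ((1 + z * b * v) * k) = 1 - z * a * b"
proof -
  have yP: "y * ((1 + z * b * v) * k) = (v + a) * k"
  proof -
    have "y * (z * b * v) = z * b * y * v" by (metis z b mult.assoc)
    then have "y * ((1 + z * b * v) * k) = y * k + (v - y + a) * k"
      by (simp add: distrib_left distrib_right mult.assoc[symmetric] v)
    then show ?thesis by (simp add: algebra_simps)
  qed
  have xk: "z * a * (x * k) = z * a * u + z * a * b + z * u * v * k - z * x * v * k + z * b * v * k"
  proof -
    have "z * a * (x * k) = z * a * x + z * a * (x * (z * a * u)) + z * a * (x * (z * u * v * k))"
      by (subst k) (simp only: distrib_left mult_1_right)
    also have "z * a * (x * (z * a * u)) = z * a * (u - x + b)"
      by (metis u z a mult.assoc)
    also have "z * a * (x * (z * u * v * k)) = z * (u - x + b) * v * k"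
      by (metis u z a mult.assoc)
    finally show ?thesis by (simp add: algebra_simps)
  qed
  have "(1 - z * (x * y)) * ((1 + z * b * v) * k) =
      (1 + z * b * v) * k - z * (x * (y * ((1 + z * b * v) * k)))"
    by (simp add: left_diff_distrib mult.assoc)
  also have "z * (x * (y * ((1 + z * b * v) * k))) = z * x * v * k + z * a * (x * k)"
    unfolding yP by (simp add: algebra_simps) (metis z a mult.assoc)
  also have "(1 + z * b * v) * k - (z * x * v * k + z * a * (x * k)) =
      (k - z * a * u - z * u * v * k) - z * a * b"
    unfolding xk by (simp add: algebra_simps)
  also have "k - z * a * u - z * u * v * k = 1"
  proof -
    have "k - z * a * u - z * u * v * k =
        (1 + z * a * u + z * u * v * k) - z * a * u - z * u * v * k"
      by (simp only: k[symmetric])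
    then show ?thesis by simp
  qed
  finally show ?thesis .
qed

lemma subordination_scalar_identity:
  fixes a b A B \<Gamma>X \<Gamma>Y E M :: "'a::field fps"
  assumes A: "A * (1 + fps_X * a * \<Gamma>X) = b + \<Gamma>X" and B: "B * (1 + fps_X * b * \<Gamma>Y) = a + \<Gamma>Y"
    and E: "E = 1 + fps_X * a * \<Gamma>X + fps_X * \<Gamma>X * \<Gamma>Y * E"
    and M: "M * (1 - fps_X * a * b) = (1 + fps_X * b * \<Gamma>Y) * E"
  shows "M = inverse (1 - fps_X * A * B)"
proof -
  let ?X = "1 + fps_X * a * \<Gamma>X" and ?Y = "1 + fps_X * b * \<Gamma>Y"
  have "?X * ?Y * (1 - fps_X * A * B) = ?X * ?Y - fps_X * (A * ?X) * (B * ?Y)"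
    by (simp add: algebra_simps)
  also have "\<dots> = ?X * ?Y - fps_X * (b + \<Gamma>X) * (a + \<Gamma>Y)"
    by (simp only: A B)
  also have "\<dots> = (1 - fps_X * a * b) * (1 - fps_X * \<Gamma>X * \<Gamma>Y)"
    by (simp add: algebra_simps power2_eq_square)
  finally have key: "?X * ?Y * (1 - fps_X * A * B) = (1 - fps_X * a * b) * (1 - fps_X * \<Gamma>X * \<Gamma>Y)" .
  have E': "E * (1 - fps_X * \<Gamma>X * \<Gamma>Y) = ?X"
    using E by (simp add: algebra_simps)
  have "M * (1 - fps_X * A * B) * ((1 - fps_X * a * b) * (1 - fps_X * \<Gamma>X * \<Gamma>Y)) =
      (M * (1 - fps_X * a * b)) * (1 - fps_X * \<Gamma>X * \<Gamma>Y) * (1 - fps_X * A * B)"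
    by (simp only: mult_ac)
  also have "\<dots> = ?Y * (E * (1 - fps_X * \<Gamma>X * \<Gamma>Y)) * (1 - fps_X * A * B)"
    unfolding M by (simp only: mult_ac)
  also have "\<dots> = 1 * ((1 - fps_X * a * b) * (1 - fps_X * \<Gamma>X * \<Gamma>Y))"
    unfolding E' key[symmetric] by (simp only: mult_ac mult_1_left)
  finally have "(1 - fps_X * A * B) * M = 1"
    by (subst (asm) mult_right_cancel) (simp_all add: fps_eq_iff exI[of _ 0] mult.commute)
  then show ?thesis by (rule fps_inverse_unique[symmetric])
qed

lemma gen_fps_bool_poly_fps_compose:
  assumes "w $ 0 = 0"
  shows "scalar_fps w * fps_const (Poly_Mapping.single [a] 1) *
      gen_fps a (bool_poly_fps \<beta> oo fps_pconst w) =
    gen_fps a (bool_poly_fps \<beta> oo fps_pconst w) - fps_const (Poly_Mapping.single [a] 1) +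
      scalar_fps (fps_shift 1 (Abs_fps \<beta>) oo w)"
  using arg_cong[OF fps_pconst_mult_bool_poly_fps_compose[OF assms, of \<beta>], of "gen_fps a"]
  by (simp add: gen_fps_mult gen_fps_add gen_fps_diff gen_fps_fps_pconst gen_fps_fps_const
      gen_poly_x)

lemma eta_tilde_compose_mult_eval_gen:
  assumes "\<theta> [] = 1" and w0: "w $ 0 = 0"
  shows "(eta_tilde \<theta> (\<lambda>n. replicate n a) oo w) *
      (1 + w * eval_gen \<theta> a (bool_poly_fps \<beta> oo fps_pconst w)) =
    (fps_shift 1 (Abs_fps \<beta>) oo w) + eval_gen \<theta> a (bool_poly_fps \<beta> oo fps_pconst w)"
  using arg_cong[OF eta_tilde_mult_eval_bool_poly_fps[of \<theta> a \<beta>, OF assms(1)], of "\<lambda>F. F oo w"]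
  by (simp add: eval_gen_compose fps_compose_mult_distrib[OF w0] fps_compose_add_distrib w0)

definition word_fps :: "(nat \<Rightarrow> letter list) \<Rightarrow> ncpoly fps" where
  "word_fps T = Abs_fps (\<lambda>n. Poly_Mapping.single (T n) 1)"

lemma lin_ext_fps_word_fps: "\<theta> [] = 1 \<Longrightarrow> T 0 = [] \<Longrightarrow> lin_ext_fps \<theta> (word_fps T) = moment_fps \<theta> T"
  by (rule fps_ext) (simp add: lin_ext_fps_def word_fps_def moment_fps_def lin_ext_single)

lemma one_minus_fps_X_mult_word_fps_wXY:
  "(1 - fps_X * fps_const (Poly_Mapping.single [LX, LY] 1)) * word_fps wXY = 1"
proof (rule fps_ext)
  fix n
  show "((1 - fps_X * fps_const (Poly_Mapping.single [LX, LY] 1)) * word_fps wXY) $ n = 1 $ n"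
    by (cases n) (simp_all add: left_diff_distrib word_fps_def wXY_def single_Nil_one
        single_mult_single mult.assoc)
qed

lemma centred_fixpoint_exists:
  assumes VX: "eval_gen \<psi> LX VX = 0" and VY: "eval_gen \<psi> LY VY = 0"
  obtains K where
    "K = 1 + fps_X * scalar_fps a * gen_fps LX VX + fps_X * gen_fps LX VX * gen_fps LY VY * K"
    "alt_centred_fps \<psi> LX K"
proof -
  let ?u = "gen_fps LX VX" and ?v = "gen_fps LY VY"
  obtain K where K: "K = 1 + fps_X * scalar_fps a * ?u + fps_X * ?u * ?v * K"
    using fps_fixpoint_exists[of "fps_X * ?u * ?v" "1 + fps_X * scalar_fps a * ?u"] by auto
  moreover have "alt_centred \<psi> LX (K $ n)" for n
  proof (rule fps_fixpoint_nth_induct[OF K, where P = "alt_centred \<psi> LX"])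
    have "alt_centred_fps \<psi> LX (1 + fps_X * scalar_fps a * ?u)"
      using alt_centred_fps_gen_fps[OF VX, of LY]
      by (simp add: mult.assoc alt_centred_fps_add alt_centred_fps_1 alt_centred_fps_fps_X_mult
          alt_centred_fps_scalar_fps_mult)
    then show "alt_centred \<psi> LX ((1 + fps_X * scalar_fps a * ?u) $ m)" for m
      by (simp add: alt_centred_fps_def)
    show "alt_centred \<psi> LX ((fps_X * ?u * ?v * W) $ m)" if "\<And>n. alt_centred \<psi> LX (W $ n)" for W m
    proof -
      have "alt_centred_fps \<psi> LX W" using that by (simp add: alt_centred_fps_def)
      then have "alt_centred_fps \<psi> LX (fps_X * (?u * (?v * W)))"
        using alt_centred_fps_gen_fps_mult[OF VX alt_centred_fps_gen_fps_mult[OF VY]]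
        by (simp add: alt_centred_fps_fps_X_mult)
      then show ?thesis by (simp add: mult.assoc alt_centred_fps_def)
    qed
  qed (simp_all add: alt_centred_0 alt_centred_add)
  then have "alt_centred_fps \<psi> LX K" by (simp add: alt_centred_fps_def)
  ultimately show ?thesis by (rule that)
qed

lemma c_free_moment_fps_XY_mult:
  fixes a b :: "complex fps" and VX VY :: "complex poly fps"
  defines "x \<equiv> fps_const (Poly_Mapping.single [LX] 1)"
    and "y \<equiv> fps_const (Poly_Mapping.single [LY] 1)"
  assumes cf: "c_free \<phi> \<psi>"
    and VX: "eval_gen \<psi> LX VX = 0" and VY: "eval_gen \<psi> LY VY = 0"
    and hX: "scalar_fps (fps_X * a) * x * gen_fps LX VX = gen_fps LX VX - x + scalar_fps b"
    and hY: "scalar_fps (fps_X * b) * y * gen_fps LY VY = gen_fps LY VY - y + scalar_fps a"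
  obtains E where
    "E = 1 + fps_X * a * eval_gen \<phi> LX VX + fps_X * eval_gen \<phi> LX VX * eval_gen \<phi> LY VY * E"
    "moment_fps \<phi> wXY * (1 - fps_X * a * b) = (1 + fps_X * b * eval_gen \<phi> LY VY) * E"
proof -
  let ?u = "gen_fps LX VX" and ?v = "gen_fps LY VY"
  let ?sa = "scalar_fps a" and ?sb = "scalar_fps b"
  have unital: "\<phi> [] = 1" using cf by (simp add: c_free_def unital_def)
  obtain K where K: "K = 1 + fps_X * ?sa * ?u + fps_X * ?u * ?v * K"
    and K_centred: "alt_centred_fps \<psi> LX K"
    using centred_fixpoint_exists[OF VX VY] .
  define E where "E = lin_ext_fps \<phi> K"
  have vK: "lin_ext_fps \<phi> (?v * K) = eval_gen \<phi> LY VY * E"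
    using c_free_lin_ext_fps_gen_fps_mult[OF cf VY K_centred] by (simp add: E_def)
  have uvK: "lin_ext_fps \<phi> (?u * (?v * K)) = eval_gen \<phi> LX VX * (eval_gen \<phi> LY VY * E)"
    using c_free_lin_ext_fps_gen_fps_mult[OF cf VX alt_centred_fps_gen_fps_mult[OF VY K_centred]]
    by (simp add: vK)
  have "E = 1 + fps_X * a * eval_gen \<phi> LX VX + fps_X * eval_gen \<phi> LX VX * eval_gen \<phi> LY VY * E"
    unfolding E_def
    by (subst K) (simp add: lin_ext_fps_add lin_ext_fps_fps_X_mult lin_ext_fps_scalar_fps_mult
        lin_ext_fps_1[of \<phi>, OF unital] lin_ext_fps_gen_fps uvK mult.assoc flip: E_def)
  moreover have "(1 - fps_X * (x * y)) * ((1 + fps_X * ?sb * ?v) * K) = 1 - fps_X * ?sa * ?sb"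
  proof (rule fixpoint_mult_identity[OF fps_mult_fps_X_commute scalar_fps_commute scalar_fps_commute
        _ _ K])
    show "fps_X * ?sa * x * ?u = ?u - x + ?sb" "fps_X * ?sb * y * ?v = ?v - y + ?sa"
      using hX hY by (simp_all add: scalar_fps_mult scalar_fps_fps_X)
  qed
  then have "(1 - fps_X * (x * y)) * ((1 + fps_X * ?sb * ?v) * K) =
      (1 - fps_X * (x * y)) * (word_fps wXY * scalar_fps (1 - fps_X * a * b))"
    using one_minus_fps_X_mult_word_fps_wXY
    by (simp add: x_def y_def single_mult_single mult.assoc[symmetric] scalar_fps_diff scalar_fps_1
        scalar_fps_mult scalar_fps_fps_X)
  then have "word_fps wXY * scalar_fps (1 - fps_X * a * b) = (1 + fps_X * ?sb * ?v) * K"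
    by (rule fps_mult_left_cancel[rotated, symmetric]) simp
  from arg_cong[OF this, of "lin_ext_fps \<phi>"]
  have "moment_fps \<phi> wXY * (1 - fps_X * a * b) = (1 + fps_X * b * eval_gen \<phi> LY VY) * E"
    by (simp add: lin_ext_fps_mult_scalar_fps lin_ext_fps_word_fps[of \<phi>, OF unital] wXY_def
        distrib_right lin_ext_fps_add lin_ext_fps_fps_X_mult lin_ext_fps_scalar_fps_mult
        mult.assoc vK flip: E_def)
  ultimately show ?thesis by (rule that)
qed

lemma c_free_moment_fps_XY:
  assumes cf: "c_free \<phi> \<psi>"
    and \<omega>X0: "\<omega>X $ 0 = 0" and \<omega>Y0: "\<omega>Y $ 0 = 0"
    and \<omega>X: "\<omega>X = fps_X * (eta_tilde \<psi> wY oo \<omega>Y)"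
    and \<omega>Y: "\<omega>Y = fps_X * (eta_tilde \<psi> wX oo \<omega>X)"
  shows "moment_fps \<phi> wXY =
    inverse (1 - fps_X * (eta_tilde \<phi> wX oo \<omega>X) * (eta_tilde \<phi> wY oo \<omega>Y))"
proof -
  have \<phi>0: "\<phi> [] = 1" and \<psi>0: "\<psi> [] = 1" using cf by (simp_all add: c_free_def unital_def)
  define \<beta>X where "\<beta>X = bool_cum (\<lambda>k. \<psi> (replicate k LX))"
  define \<beta>Y where "\<beta>Y = bool_cum (\<lambda>k. \<psi> (replicate k LY))"
  define a where "a = eta_tilde \<psi> wY oo \<omega>Y"
  define b where "b = eta_tilde \<psi> wX oo \<omega>X"
  have a: "a = fps_shift 1 (Abs_fps \<beta>Y) oo \<omega>Y" and b: "b = fps_shift 1 (Abs_fps \<beta>X) oo \<omega>X"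
    by (simp_all add: a_def b_def \<beta>X_def \<beta>Y_def wX_def[abs_def] wY_def[abs_def] eta_tilde_replicate)
  define VX where "VX = bool_poly_fps \<beta>X oo fps_pconst \<omega>X"
  define VY where "VY = bool_poly_fps \<beta>Y oo fps_pconst \<omega>Y"
  have "eval_gen \<psi> LX VX = 0" "eval_gen \<psi> LY VY = 0"
    by (simp_all add: VX_def VY_def \<beta>X_def \<beta>Y_def eval_gen_compose
        eval_gen_bool_poly_fps_bool_cum[of \<psi>, OF \<psi>0])
  moreover have "scalar_fps (fps_X * a) * fps_const (Poly_Mapping.single [LX] 1) * gen_fps LX VX =
      gen_fps LX VX - fps_const (Poly_Mapping.single [LX] 1) + scalar_fps b"
    using gen_fps_bool_poly_fps_compose[OF \<omega>X0, of LX \<beta>X] by (simp add: VX_def b a_def flip: \<omega>X)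
  moreover have "scalar_fps (fps_X * b) * fps_const (Poly_Mapping.single [LY] 1) * gen_fps LY VY =
      gen_fps LY VY - fps_const (Poly_Mapping.single [LY] 1) + scalar_fps a"
    using gen_fps_bool_poly_fps_compose[OF \<omega>Y0, of LY \<beta>Y] by (simp add: VY_def a b_def flip: \<omega>Y)
  ultimately obtain E where
    E: "E = 1 + fps_X * a * eval_gen \<phi> LX VX + fps_X * eval_gen \<phi> LX VX * eval_gen \<phi> LY VY * E"
    and M: "moment_fps \<phi> wXY * (1 - fps_X * a * b) = (1 + fps_X * b * eval_gen \<phi> LY VY) * E"
    by (rule c_free_moment_fps_XY_mult[OF cf])
  show ?thesis
  proof (rule subordination_scalar_identity[OF _ _ E M])
    show "(eta_tilde \<phi> wX oo \<omega>X) * (1 + fps_X * a * eval_gen \<phi> LX VX) = b + eval_gen \<phi> LX VX"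
      using eta_tilde_compose_mult_eval_gen[of \<phi>, OF \<phi>0 \<omega>X0, of LX \<beta>X]
      by (simp add: wX_def[abs_def] VX_def b a_def flip: \<omega>X)
    show "(eta_tilde \<phi> wY oo \<omega>Y) * (1 + fps_X * b * eval_gen \<phi> LY VY) = a + eval_gen \<phi> LY VY"
      using eta_tilde_compose_mult_eval_gen[of \<phi>, OF \<phi>0 \<omega>Y0, of LY \<beta>Y]
      by (simp add: wY_def[abs_def] VY_def a b_def flip: \<omega>Y)
  qed
qed

lemma c_free_Sigma_tr_XY:
  assumes cf: "c_free \<phi> \<psi>"
    and \<omega>X0: "\<omega>X $ 0 = 0" and \<omega>Y0: "\<omega>Y $ 0 = 0"
    and \<omega>X: "\<omega>X = fps_X * (eta_tilde \<psi> wY oo \<omega>Y)"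
    and \<omega>Y: "\<omega>Y = fps_X * (eta_tilde \<psi> wX oo \<omega>X)"
    and nX: "\<psi> [LX] \<noteq> 0" and nY: "\<psi> [LY] \<noteq> 0"
  shows "Sigma_tr \<phi> \<psi> wXY = Sigma_tr \<phi> \<psi> wX * Sigma_tr \<phi> \<psi> wY"
proof -
  define a where "a = eta_tilde \<psi> wY oo \<omega>Y"
  define b where "b = eta_tilde \<psi> wX oo \<omega>X"
  have "moment_fps \<psi> wXY = inverse (1 - fps_X * (b * a))"
    using c_free_moment_fps_XY[OF c_free_self[OF cf] \<omega>X0 \<omega>Y0 \<omega>X \<omega>Y]
    by (simp add: a_def b_def mult.assoc)
  then have \<eta>XY: "eta \<psi> wXY = fps_X * (b * a)"
    by (simp add: eta_eq_fps_X_mult_eta_tilde eta_tilde_eq_if_moment_fps_eq)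
  have \<eta>0: "eta \<psi> T $ 0 = 0" for T by (simp add: eta_def)
  have n: "\<psi> (wX 1) \<noteq> 0" "\<psi> (wY 1) \<noteq> 0" using nX nY by (simp_all add: wX_def wY_def)
  then have \<eta>X1: "eta \<psi> wX $ 1 \<noteq> 0" and \<eta>Y1: "eta \<psi> wY $ 1 \<noteq> 0"
    by (simp_all add: eta_eq_fps_X_mult_eta_tilde eta_tilde_nth_0)
  have \<eta>XY1: "eta \<psi> wXY $ 1 \<noteq> 0"
    using n by (simp add: \<eta>XY a_def b_def eta_tilde_nth_0)
  have "eta \<psi> wX oo \<omega>X = \<omega>X * b" "eta \<psi> wY oo \<omega>Y = \<omega>Y * a"
    by (simp_all only: eta_eq_fps_X_mult_eta_tilde fps_compose_mult_distrib \<omega>X0 \<omega>Y0 a_def b_def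
        fps_X_fps_compose_startby0)
  then have "eta \<psi> wX oo \<omega>X = eta \<psi> wXY" "eta \<psi> wY oo \<omega>Y = eta \<psi> wXY"
    by (simp_all add: \<eta>XY mult_ac \<omega>X[folded a_def] \<omega>Y[folded b_def])
  then have invX: "\<omega>X oo fps_inv (eta \<psi> wXY) = fps_inv (eta \<psi> wX)"
    and invY: "\<omega>Y oo fps_inv (eta \<psi> wXY) = fps_inv (eta \<psi> wY)"
    using compose_fps_inv_eq_fps_inv[OF \<eta>0 \<eta>X1 \<omega>X0 \<eta>0 \<eta>XY1]
      compose_fps_inv_eq_fps_inv[OF \<eta>0 \<eta>Y1 \<omega>Y0 \<eta>0 \<eta>XY1] by simp_all
  have I0: "fps_inv (eta \<psi> wXY) $ 0 = 0" by (simp add: fps_inv_def)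
  have "eta_tilde \<phi> wXY = (eta_tilde \<phi> wX oo \<omega>X) * (eta_tilde \<phi> wY oo \<omega>Y)"
    using c_free_moment_fps_XY[OF cf \<omega>X0 \<omega>Y0 \<omega>X \<omega>Y]
    by (simp add: eta_tilde_eq_if_moment_fps_eq mult.assoc)
  then show ?thesis
    by (simp add: Sigma_tr_def fps_compose_mult_distrib[OF I0] invX invY
        flip: fps_compose_assoc[OF I0 \<omega>X0] fps_compose_assoc[OF I0 \<omega>Y0])
qed

theorem proposition7:
  fixes \<phi> \<psi> :: functional and \<omega>X \<omega>Y :: "complex fps"
  assumes "c_free \<phi> \<psi>"
    and "fps_nth \<omega>X 0 = 0" and "fps_nth \<omega>Y 0 = 0"
    and "\<omega>X = fps_X * (eta_tilde \<psi> wY oo \<omega>Y)"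
    and "\<omega>Y = fps_X * (eta_tilde \<psi> wX oo \<omega>X)"
  shows "moment_fps \<phi> wXY =
           inverse (1 - fps_X * (eta_tilde \<phi> wX oo \<omega>X) * (eta_tilde \<phi> wY oo \<omega>Y))
       \<and> (\<psi> [LX] \<noteq> 0 \<and> \<psi> [LY] \<noteq> 0 \<longrightarrow>
           Sigma_tr \<phi> \<psi> wXY = Sigma_tr \<phi> \<psi> wX * Sigma_tr \<phi> \<psi> wY)"
  using c_free_moment_fps_XY[OF assms] c_free_Sigma_tr_XY[OF assms] by blast

end
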